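(* Let $0<\epsilon<1/2$, $C=\lceil\epsilon^{-1}\rceil$ and $c\in\{0,\dots,C-1\}$. Let $G$ be a graph with edge weights $w(e)\ge1$, and let $G^c$, its levels and the combined matching $\hat{M}^c$ be as defined below, where for every level $l$ the matching $M^c_l$ is a $(1+\epsilon)$-approximate maximum weight matching of the subgraph of $G^c$ consisting of its level-$l$ edges. Let $\mathcal{M}^c$ be a maximum weight matching of $G^c$. Then $$(1+7\epsilon)\,w(\hat{M}^c)\ge w(\mathcal{M}^c).$$
   Context: An edge $e$ is in bucket $b\in\mathbb{Z}$ if $w(e)\in[\epsilon^{-b},\epsilon^{-(b+1)})$. The graph $G^c$ is obtained from $G$ by removing all edges whose bucket $b$ satisfies $b\equiv c\pmod C$. Level $l$ of copy $c$ consists of the edges of $G^c$ in buckets $lC+c+1,\dots,(l+1)C+c-1$. The combined matching $\hat{M}^c$ is formed greedily: start from $\emptyset$; for $l$ from the maximum level down to the minimum, add the (remaining) edges of $M^c_l$, and for each $(u,v)\in M^c_l$ remove all edges incident to $u$ or $v$ from every $M^c_{l'}$ with $l'<l$. For an edge set $S$, $w(S)=\sum_{e\in S}w(e)$; a matching $M$ of $H$ is a $(1+\epsilon)$-approximate maximum weight matching if $w(M)\ge\frac{1}{1+\epsilon}$ times the maximum weight of a matching of $H$. *)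

theory Defs
  imports Complex_Main
begin

definition graph :: "'v set set \<Rightarrow> bool" where
  "graph E \<longleftrightarrow> finite E \<and> (\<forall>e\<in>E. card e = 2)"

definition wt :: "('v set \<Rightarrow> real) \<Rightarrow> 'v set set \<Rightarrow> real" where
  "wt w S = (\<Sum>e\<in>S. w e)"

definition matching :: "'v set set \<Rightarrow> 'v set set \<Rightarrow> bool" where
  "matching H M \<longleftrightarrow> M \<subseteq> H \<and> (\<forall>e\<in>M. \<forall>f\<in>M. e \<noteq> f \<longrightarrow> e \<inter> f = {})"

definition max_weight_matching :: "('v set \<Rightarrow> real) \<Rightarrow> 'v set set \<Rightarrow> 'v set set \<Rightarrow> bool" where
  "max_weight_matching w H M \<longleftrightarrow> matching H M \<and> (\<forall>M'. matching H M' \<longrightarrow> wt w M' \<le> wt w M)"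

definition approx_max_weight_matching ::
  "real \<Rightarrow> ('v set \<Rightarrow> real) \<Rightarrow> 'v set set \<Rightarrow> 'v set set \<Rightarrow> bool" where
  "approx_max_weight_matching eps w H M \<longleftrightarrow> matching H M \<and>
     (\<exists>Mopt. max_weight_matching w H Mopt \<and> wt w M \<ge> wt w Mopt / (1 + eps))"

definition in_bucket :: "real \<Rightarrow> real \<Rightarrow> int \<Rightarrow> bool" where
  "in_bucket eps x b \<longleftrightarrow> eps powr (- real_of_int b) \<le> x \<and> x < eps powr (- real_of_int (b + 1))"

definition bucket :: "real \<Rightarrow> real \<Rightarrow> int" where
  "bucket eps x = (THE b. in_bucket eps x b)"

definition copy_edges :: "real \<Rightarrow> int \<Rightarrow> int \<Rightarrow> ('v set \<Rightarrow> real) \<Rightarrow> 'v set set \<Rightarrow> 'v set set" where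
  "copy_edges eps C c w E = {e \<in> E. bucket eps (w e) mod C \<noteq> c mod C}"

definition level_edges :: "real \<Rightarrow> int \<Rightarrow> int \<Rightarrow> ('v set \<Rightarrow> real) \<Rightarrow> 'v set set \<Rightarrow> int \<Rightarrow> 'v set set" where
  "level_edges eps C c w E l = {e \<in> copy_edges eps C c w E.
      l * C + c + 1 \<le> bucket eps (w e) \<and> bucket eps (w e) \<le> (l + 1) * C + c - 1}"

definition level_of :: "real \<Rightarrow> int \<Rightarrow> int \<Rightarrow> ('v set \<Rightarrow> real) \<Rightarrow> 'v set \<Rightarrow> int" where
  "level_of eps C c w e = (bucket eps (w e) - c - 1) div C"

definition greedy_step :: "(int \<Rightarrow> 'v set set) \<Rightarrow> 'v set set \<Rightarrow> int \<Rightarrow> 'v set set" where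
  "greedy_step M S l = S \<union> {e \<in> M l. \<forall>f\<in>S. e \<inter> f = {}}"

definition combined_matching ::
  "real \<Rightarrow> int \<Rightarrow> int \<Rightarrow> ('v set \<Rightarrow> real) \<Rightarrow> 'v set set \<Rightarrow> (int \<Rightarrow> 'v set set) \<Rightarrow> 'v set set" where
  "combined_matching eps C c w E M =
     (let Ls = level_of eps C c w ` copy_edges eps C c w E
      in foldl (greedy_step M) {} (rev [Min Ls..Max Ls]))"

end

theory Submission imports Defs begin

text \<open>Edges of level l' outweigh edges of a level \<open>l < l'\<close> by a factor at least
  \<open>1/eps^(l'-l)\<close>, because the bucket separating consecutive levels is missing from \<open>G\<^sup>c\<close>.
  Processing the levels top-down, an edge g of \<open>M l\<close> dropped by the greedy algorithm meets an
  edge f chosen earlier from a higher level, and \<open>w g\<close> is charged to f. Since f meets at most two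
  edges of each matching, it collects at most \<open>2 eps\<^sup>k w f\<close> from the level k steps below its own,
  in total at most \<open>2 eps/(1-eps) w f\<close>; so all the \<open>M l\<close> together weigh at most
  \<open>(1 + 2 eps/(1-eps))\<close> times the combined matching. The maximum matching of \<open>G\<^sup>c\<close> restricted
  to one level is a matching of that level, so it weighs at most \<open>1 + eps\<close> times the sum of the
  \<open>w(M l)\<close>; and \<open>(1+eps)\<^sup>2/(1-eps) \<le> 1 + 7 eps\<close> for \<open>eps \<le> 1/2\<close>.\<close>

lemma in_bucket_iff_floor:
  assumes "0 < eps" "eps < 1" "0 < x"
  shows "in_bucket eps x b \<longleftrightarrow> b = \<lfloor>ln x / - ln eps\<rfloor>"
proof -
  define a where "a = - ln eps"
  have a: "0 < a" using assms unfolding a_def by simp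
  have powr_exp: "\<And>r. eps powr r = exp (- r * a)" using assms unfolding a_def powr_def by simp
  have "in_bucket eps x b \<longleftrightarrow> exp (real_of_int b * a) \<le> x \<and> x < exp ((real_of_int b + 1) * a)"
    unfolding in_bucket_def powr_exp by (simp add: algebra_simps)
  also have "\<dots> \<longleftrightarrow> real_of_int b * a \<le> ln x \<and> ln x < (real_of_int b + 1) * a"
    using assms by (metis exp_le_cancel_iff exp_less_cancel_iff exp_ln)
  also have "\<dots> \<longleftrightarrow> real_of_int b \<le> ln x / a \<and> ln x / a < real_of_int b + 1"
    using a by (simp add: pos_le_divide_eq pos_divide_less_eq)
  also have "\<dots> \<longleftrightarrow> b = \<lfloor>ln x / a\<rfloor>" by (metis floor_eq_iff)
  finally show ?thesis unfolding a_def .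
qed

lemma in_bucket_bucket:
  assumes "0 < eps" "eps < 1" "0 < x"
  shows "in_bucket eps x (bucket eps x)"
proof -
  have "bucket eps x = \<lfloor>ln x / - ln eps\<rfloor>"
    unfolding bucket_def using in_bucket_iff_floor[OF assms] by (intro the_equality) auto
  then show ?thesis using in_bucket_iff_floor[OF assms] by simp
qed

lemma level_of_eq_if_in_level_edges:
  assumes "0 < C" "e \<in> level_edges eps C c w E l"
  shows "level_of eps C c w e = l"
proof -
  define r where "r = bucket eps (w e) - c - 1 - l * C"
  have "0 \<le> r" "r < C" using assms(2) unfolding level_edges_def r_def by (auto simp: algebra_simps)
  then have "(r + l * C) div C = l" using assms(1) by simp
  then show ?thesis unfolding level_of_def r_def by simp
qed

lemma in_level_edges_level_of:
  assumes "0 < C" "e \<in> copy_edges eps C c w E"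
  shows "e \<in> level_edges eps C c w E (level_of eps C c w e)"
proof -
  define b where "b = bucket eps (w e)"
  define l where "l = (b - c - 1) div C"
  define r where "r = (b - c - 1) mod C"
  have b: "b = l * C + c + 1 + r" unfolding l_def r_def by (simp add: algebra_simps)
  have r: "0 \<le> r" "r < C" unfolding r_def using assms(1) by auto
  have "r \<noteq> C - 1"
  proof
    assume "r = C - 1"
    then have "b = (l + 1) * C + c" using b by (simp add: algebra_simps)
    then have "b mod C = c mod C" by (metis mod_mult_self3 mult.commute)
    then show False using assms(2) unfolding copy_edges_def b_def by simp
  qed
  then show ?thesis
    using assms(2) b r unfolding level_edges_def level_of_def b_def l_def by (auto simp: algebra_simps)
qed

lemma level_edges_weight_gap:
  assumes eps: "0 < eps" "eps < 1" and "1 \<le> C" and pos: "0 < w g" "0 < w f"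
    and ll': "l < l'" and g: "g \<in> level_edges eps C c w E l" and f: "f \<in> level_edges eps C c w E l'"
  shows "w g \<le> eps powr real_of_int (l' - l) * w f"
proof -
  define bg where "bg = bucket eps (w g)"
  define bf where "bf = bucket eps (w f)"
  have "bg \<le> (l + 1) * C + c - 1" "l' * C + c + 1 \<le> bf"
    using g f unfolding level_edges_def bg_def bf_def by auto
  moreover have "(l' - l - 1) * 1 \<le> (l' - l - 1) * C" using \<open>1 \<le> C\<close> ll' by (intro mult_left_mono) auto
  ultimately have gap: "l' - l \<le> bf - bg - 1" by (simp add: algebra_simps)
  have wg: "w g < eps powr - real_of_int (bg + 1)" and wf: "eps powr - real_of_int bf \<le> w f"
    using in_bucket_bucket[OF eps pos(1)] in_bucket_bucket[OF eps pos(2)]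
    unfolding in_bucket_def bg_def bf_def by auto
  have "eps powr - real_of_int (bg + 1) \<le> eps powr (real_of_int (l' - l) + - real_of_int bf)"
    using gap eps by (intro powr_mono') auto
  also have "\<dots> = eps powr real_of_int (l' - l) * eps powr - real_of_int bf"
    by (rule powr_add)
  also have "\<dots> \<le> eps powr real_of_int (l' - l) * w f"
    using wf by (intro mult_left_mono) auto
  finally show ?thesis using wg by simp
qed

lemma card_matching_edges_meeting_le:
  assumes "matching H Mx" "finite f"
  shows "card {g \<in> Mx. g \<inter> f \<noteq> {}} \<le> card f"
proof -
  let ?G = "{g \<in> Mx. g \<inter> f \<noteq> {}}"
  have "\<forall>g\<in>?G. \<exists>v. v \<in> g \<inter> f" by blast
  from bchoice[OF this] obtain h where h: "\<forall>g\<in>?G. h g \<in> g \<inter> f" by blast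
  have "inj_on h ?G"
  proof (rule inj_onI)
    fix g1 g2 assume g: "g1 \<in> ?G" "g2 \<in> ?G" and "h g1 = h g2"
    then have "h g1 \<in> g1 \<inter> g2" using h by auto
    then show "g1 = g2" using assms(1) g unfolding matching_def by blast
  qed
  moreover have "h ` ?G \<subseteq> f" using h by blast
  ultimately show ?thesis using assms(2) by (rule card_inj_on_le)
qed

lemma wt_matching_edges_meeting_le:
  fixes B :: "'v set \<Rightarrow> real"
  assumes "matching H Mx" "finite Mx" "finite S"
    and w: "\<And>g. g \<in> Mx \<Longrightarrow> 0 \<le> w g"
    and B: "\<And>f. f \<in> S \<Longrightarrow> finite f \<and> 0 \<le> B f"
    and wB: "\<And>f g. f \<in> S \<Longrightarrow> g \<in> Mx \<Longrightarrow> g \<inter> f \<noteq> {} \<Longrightarrow> w g \<le> B f"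
  shows "wt w {g \<in> Mx. \<exists>f\<in>S. g \<inter> f \<noteq> {}} \<le> (\<Sum>f\<in>S. card f * B f)"
proof -
  let ?T = "{g \<in> Mx. \<exists>f\<in>S. g \<inter> f \<noteq> {}}"
  let ?meet = "\<lambda>g f. if g \<inter> f \<noteq> {} then w g else 0"
  have "wt w ?T \<le> (\<Sum>g\<in>?T. \<Sum>f\<in>S. ?meet g f)"
    unfolding wt_def
  proof (rule sum_mono)
    fix g assume "g \<in> ?T"
    then obtain f where "f \<in> S" "g \<inter> f \<noteq> {}" by blast
    then show "w g \<le> (\<Sum>f\<in>S. ?meet g f)"
      using member_le_sum[of f S "?meet g"] \<open>finite S\<close> w \<open>g \<in> ?T\<close> by auto
  qed
  also have "\<dots> = (\<Sum>f\<in>S. \<Sum>g\<in>?T. ?meet g f)" by (rule sum.swap)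
  also have "\<dots> = (\<Sum>f\<in>S. wt w {g \<in> Mx. g \<inter> f \<noteq> {}})"
  proof (rule sum.cong[OF refl])
    fix f assume "f \<in> S"
    have "(\<Sum>g\<in>?T. ?meet g f) = wt w {g \<in> ?T. g \<inter> f \<noteq> {}}"
      unfolding wt_def using \<open>finite Mx\<close> by (intro sum.inter_filter[symmetric]) simp
    also have "{g \<in> ?T. g \<inter> f \<noteq> {}} = {g \<in> Mx. g \<inter> f \<noteq> {}}" using \<open>f \<in> S\<close> by blast
    finally show "(\<Sum>g\<in>?T. ?meet g f) = wt w {g \<in> Mx. g \<inter> f \<noteq> {}}" .
  qed
  also have "\<dots> \<le> (\<Sum>f\<in>S. card f * B f)"
  proof (rule sum_mono)
    fix f assume "f \<in> S"
    have "wt w {g \<in> Mx. g \<inter> f \<noteq> {}} \<le> card {g \<in> Mx. g \<inter> f \<noteq> {}} * B f"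
      unfolding wt_def using wB[OF \<open>f \<in> S\<close>] by (intro sum_bounded_above) auto
    also have "\<dots> \<le> card f * B f"
      using card_matching_edges_meeting_le[OF assms(1)] B[OF \<open>f \<in> S\<close>] by (intro mult_right_mono) auto
    finally show "wt w {g \<in> Mx. g \<inter> f \<noteq> {}} \<le> card f * B f" .
  qed
  finally show ?thesis .
qed

text \<open>For \<open>n \<ge> 0\<close> this is \<open>1 + 2 (eps + eps\<^sup>2 + \<dots> + eps\<^sup>n)\<close>: an edge's own weight plus the
  charge it can collect from the n levels below it, relative to its weight.\<close>
definition charge_factor :: "real \<Rightarrow> int \<Rightarrow> real" where
  "charge_factor eps n = 1 + 2 * eps * (1 - eps powr real_of_int n) / (1 - eps)"

lemma charge_factor_diff:
  assumes "0 < eps" "eps < 1"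
  shows "charge_factor eps (n - 1) + 2 * eps powr real_of_int n = charge_factor eps n"
proof -
  have "eps powr real_of_int n = eps powr real_of_int (n - 1) * eps"
    using assms by (simp add: powr_diff)
  then show ?thesis using assms unfolding charge_factor_def by (simp add: field_simps)
qed

lemma charge_factor_mono:
  assumes "0 < eps" "eps < 1" "n \<le> m"
  shows "charge_factor eps n \<le> charge_factor eps m"
proof -
  have "eps powr real_of_int m \<le> eps powr real_of_int n"
    using assms by (intro powr_mono') auto
  then show ?thesis using assms unfolding charge_factor_def by (simp add: divide_right_mono)
qed

lemma one_le_charge_factor:
  assumes "0 < eps" "eps < 1" "0 \<le> n"
  shows "1 \<le> charge_factor eps n"
  using charge_factor_mono[OF assms] assms(1) by (simp add: charge_factor_def)

lemma charge_factor_le: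
  assumes "0 < eps" "eps < 1"
  shows "charge_factor eps n \<le> 1 + 2 * eps / (1 - eps)"
  using assms unfolding charge_factor_def by (simp add: divide_right_mono)

lemma foldl_greedy_step_subset:
  "foldl (greedy_step M) S xs \<subseteq> S \<union> \<Union> (M ` set xs)"
  by (induction xs arbitrary: S) (fastforce simp: greedy_step_def)+

lemma wt_matching_le_wt_avoiding_plus_charge:
  fixes B :: "'v set \<Rightarrow> real"
  assumes "matching H Mx" "finite Mx" "finite S"
    and "\<And>g. g \<in> Mx \<Longrightarrow> 0 \<le> w g"
    and B: "\<And>f. f \<in> S \<Longrightarrow> card f = 2 \<and> 0 \<le> B f"
    and "\<And>f g. f \<in> S \<Longrightarrow> g \<in> Mx \<Longrightarrow> w g \<le> B f"
  shows "wt w Mx \<le> wt w {e \<in> Mx. \<forall>f\<in>S. e \<inter> f = {}} + (\<Sum>f\<in>S. 2 * B f)"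
proof -
  let ?A = "{e \<in> Mx. \<forall>f\<in>S. e \<inter> f = {}}" and ?T = "{g \<in> Mx. \<exists>f\<in>S. g \<inter> f \<noteq> {}}"
  have "Mx = ?A \<union> ?T" by blast
  moreover have "wt w (?A \<union> ?T) = wt w ?A + wt w ?T"
    unfolding wt_def using \<open>finite Mx\<close> by (intro sum.union_disjoint) auto
  ultimately have "wt w Mx = wt w ?A + wt w ?T" by simp
  also have "wt w ?T \<le> (\<Sum>f\<in>S. card f * B f)"
  proof (rule wt_matching_edges_meeting_le[OF assms(1-4)])
    show "finite f \<and> 0 \<le> B f" if "f \<in> S" for f using B[OF that] card_ge_0_finite by force
    show "w g \<le> B f" if "f \<in> S" "g \<in> Mx" for f g using assms(6) that by blast
  qed
  also have "\<dots> = (\<Sum>f\<in>S. 2 * B f)" using B by simp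
  finally show ?thesis by simp
qed

lemma sum_charge_factor_step:
  fixes lev :: "'v set \<Rightarrow> int"
  assumes eps: "0 < eps" "eps < 1" and "finite S" "finite A" "S \<inter> A = {}" "l \<le> x"
    and A: "\<And>f. f \<in> A \<Longrightarrow> lev f = x" and w: "\<And>f. f \<in> S \<union> A \<Longrightarrow> 0 \<le> w f"
  shows "(\<Sum>f\<in>S. charge_factor eps (lev f - x - 1) * w f)
      + (\<Sum>f\<in>S. 2 * (eps powr real_of_int (lev f - x) * w f)) + wt w A
    \<le> (\<Sum>f\<in>S \<union> A. charge_factor eps (lev f - l) * w f)"
proof -
  have "charge_factor eps (n - 1) * a + 2 * (eps powr real_of_int n * a) = charge_factor eps n * a"
    for n a using charge_factor_diff[OF eps, of n] by (metis distrib_right mult.assoc)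
  then have "(\<Sum>f\<in>S. charge_factor eps (lev f - x - 1) * w f)
      + (\<Sum>f\<in>S. 2 * (eps powr real_of_int (lev f - x) * w f))
    = (\<Sum>f\<in>S. charge_factor eps (lev f - x) * w f)"
    by (simp only: sum.distrib[symmetric])
  also have "\<dots> \<le> (\<Sum>f\<in>S. charge_factor eps (lev f - l) * w f)"
    using w \<open>l \<le> x\<close> by (intro sum_mono mult_right_mono charge_factor_mono[OF eps]) auto
  moreover have "wt w A \<le> (\<Sum>f\<in>A. charge_factor eps (lev f - l) * w f)"
    unfolding wt_def
  proof (rule sum_mono)
    fix f assume "f \<in> A"
    then have "lev f = x" "0 \<le> w f" using A w by blast+
    then show "w f \<le> charge_factor eps (lev f - l) * w f"
      using one_le_charge_factor[OF eps, of "lev f - l"] \<open>l \<le> x\<close> by (simp add: mult_le_cancel_right1)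
  qed
  ultimately show ?thesis using assms(3-5) by (simp add: sum.union_disjoint)
qed

lemma sum_wt_le_greedy_fold:
  fixes lev :: "'v set \<Rightarrow> int"
  assumes eps: "0 < eps" "eps < 1"
    and match: "\<And>l. matching (H l) (M l)" and fin: "\<And>l. finite (M l)"
    and edge: "\<And>l e. e \<in> M l \<Longrightarrow> card e = 2 \<and> lev e = l \<and> 0 \<le> w e"
    and gap: "\<And>l l' g f. l < l' \<Longrightarrow> g \<in> M l \<Longrightarrow> f \<in> M l' \<Longrightarrow>
       w g \<le> eps powr real_of_int (l' - l) * w f"
    and "sorted_wrt (>) xs" "\<forall>k\<in>set xs. l \<le> k"
  shows "(\<Sum>k\<in>set xs. wt w (M k))
    \<le> (\<Sum>f\<in>foldl (greedy_step M) {} xs. charge_factor eps (lev f - l) * w f)"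
  using assms(7,8)
proof (induction xs arbitrary: l rule: rev_induct)
  case Nil
  then show ?case by simp
next
  case (snoc x xs)
  define S where "S = foldl (greedy_step M) {} xs"
  define A where "A = {e \<in> M x. \<forall>f\<in>S. e \<inter> f = {}}"
  have above: "\<And>k. k \<in> set xs \<Longrightarrow> x < k" and "sorted_wrt (>) xs" "l \<le> x"
    using snoc.prems by (auto simp: sorted_wrt_append)
  have S_sub: "S \<subseteq> \<Union> (M ` set xs)"
    using foldl_greedy_step_subset[of M "{}" xs] unfolding S_def by simp
  then have "finite S" using fin by (meson List.finite_set finite_UN_I finite_subset)
  have S_edge: "f \<in> M (lev f) \<and> x < lev f" if "f \<in> S" for f
    using S_sub that edge above by fastforce
  have "finite A" "A \<subseteq> M x" using fin unfolding A_def by auto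
  \<comment> \<open>an edge of A is disjoint from every edge of S, so it is in S only if empty\<close>
  have "S \<inter> A = {}"
    using edge \<open>A \<subseteq> M x\<close> unfolding A_def by fastforce
  have "\<forall>k\<in>set xs. x + 1 \<le> k" using above by fastforce
  then have "(\<Sum>k\<in>set xs. wt w (M k)) \<le> (\<Sum>f\<in>S. charge_factor eps (lev f - x - 1) * w f)"
    using snoc.IH[OF \<open>sorted_wrt (>) xs\<close>] unfolding S_def by (simp add: diff_diff_eq)
  moreover have "wt w (M x) \<le> wt w A + (\<Sum>f\<in>S. 2 * (eps powr real_of_int (lev f - x) * w f))"
    unfolding A_def
  proof (rule wt_matching_le_wt_avoiding_plus_charge[OF match fin \<open>finite S\<close>])
    show "0 \<le> w g" if "g \<in> M x" for g using edge that by blast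
    show "card f = 2 \<and> 0 \<le> eps powr real_of_int (lev f - x) * w f" if "f \<in> S" for f
      using edge[of f "lev f"] S_edge[OF that] by simp
    show "w g \<le> eps powr real_of_int (lev f - x) * w f" if "f \<in> S" "g \<in> M x" for f g
      using gap S_edge[OF that(1)] that(2) by blast
  qed
  moreover have "x \<notin> set xs" using above by blast
  then have "(\<Sum>k\<in>set (xs @ [x]). wt w (M k)) = (\<Sum>k\<in>set xs. wt w (M k)) + wt w (M x)"
    by (simp add: add.commute)
  moreover have "(\<Sum>f\<in>S. charge_factor eps (lev f - x - 1) * w f)
      + (\<Sum>f\<in>S. 2 * (eps powr real_of_int (lev f - x) * w f)) + wt w A
    \<le> (\<Sum>f\<in>S \<union> A. charge_factor eps (lev f - l) * w f)"
    using \<open>finite S\<close> \<open>finite A\<close> \<open>S \<inter> A = {}\<close> \<open>l \<le> x\<close> \<open>A \<subseteq> M x\<close> S_edge edge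
    by (intro sum_charge_factor_step[OF eps]) blast+
  ultimately have "(\<Sum>k\<in>set (xs @ [x]). wt w (M k)) \<le> (\<Sum>f\<in>S \<union> A. charge_factor eps (lev f - l) * w f)"
    by linarith
  also have "S \<union> A = foldl (greedy_step M) {} (xs @ [x])"
    by (simp add: S_def A_def greedy_step_def)
  finally show ?case .
qed

lemma wt_max_weight_matching_le_sum_levels:
  assumes "0 < eps" "0 < C" "finite E"
    and approx: "\<And>l. approx_max_weight_matching eps w (level_edges eps C c w E l) (M l)"
    and opt: "max_weight_matching w (copy_edges eps C c w E) Mopt"
    and "finite L" "level_of eps C c w ` copy_edges eps C c w E \<subseteq> L"
  shows "wt w Mopt \<le> (1 + eps) * (\<Sum>l\<in>L. wt w (M l))"
proof -
  let ?lev = "level_of eps C c w"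
  have "Mopt \<subseteq> copy_edges eps C c w E" using opt unfolding max_weight_matching_def matching_def by blast
  moreover have "finite (copy_edges eps C c w E)" using \<open>finite E\<close> unfolding copy_edges_def by simp
  ultimately have "finite Mopt" by (rule finite_subset)
  have "wt w Mopt = (\<Sum>l\<in>L. wt w {e \<in> Mopt. ?lev e = l})"
    unfolding wt_def using \<open>finite Mopt\<close> \<open>finite L\<close> \<open>Mopt \<subseteq> _\<close> assms(7)
    by (intro sum.group[symmetric]) auto
  also have "\<dots> \<le> (\<Sum>l\<in>L. (1 + eps) * wt w (M l))"
  proof (rule sum_mono)
    fix l
    obtain Ml where Ml: "max_weight_matching w (level_edges eps C c w E l) Ml"
      "wt w Ml / (1 + eps) \<le> wt w (M l)"
      using approx[of l] unfolding approx_max_weight_matching_def by blast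
    have "{e \<in> Mopt. ?lev e = l} \<subseteq> level_edges eps C c w E l"
      using \<open>Mopt \<subseteq> _\<close> in_level_edges_level_of[OF \<open>0 < C\<close>] by blast
    then have "matching (level_edges eps C c w E l) {e \<in> Mopt. ?lev e = l}"
      using opt unfolding max_weight_matching_def matching_def by blast
    then have "wt w {e \<in> Mopt. ?lev e = l} \<le> wt w Ml" using Ml(1) unfolding max_weight_matching_def by blast
    also have "\<dots> \<le> (1 + eps) * wt w (M l)" using Ml(2) \<open>0 < eps\<close> by (simp add: field_simps)
    finally show "wt w {e \<in> Mopt. ?lev e = l} \<le> (1 + eps) * wt w (M l)" .
  qed
  also have "\<dots> = (1 + eps) * (\<Sum>l\<in>L. wt w (M l))" by (simp add: sum_distrib_left)
  finally show ?thesis .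
qed

lemma combined_matching_subset:
  "(\<And>l. M l \<subseteq> E) \<Longrightarrow> combined_matching eps C c w E M \<subseteq> E"
  using foldl_greedy_step_subset[of M "{}"] unfolding combined_matching_def Let_def by blast

lemma sum_wt_levels_le_wt_combined_matching:
  assumes eps: "0 < eps" "eps < 1" and "1 \<le> C" and "graph E" and pos: "\<And>e. e \<in> E \<Longrightarrow> 0 < w e"
    and match: "\<And>l. matching (level_edges eps C c w E l) (M l)"
  defines "Ls \<equiv> level_of eps C c w ` copy_edges eps C c w E"
  shows "(\<Sum>l\<in>{Min Ls..Max Ls}. wt w (M l))
    \<le> (1 + 2 * eps / (1 - eps)) * wt w (combined_matching eps C c w E M)"
proof -
  let ?lev = "level_of eps C c w" and ?M\<^sub>c = "combined_matching eps C c w E M"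
  have ME: "M l \<subseteq> E" for l
    using match[of l] unfolding matching_def level_edges_def copy_edges_def by blast
  have "?M\<^sub>c \<subseteq> E" using ME by (rule combined_matching_subset)
  have levels: "{Min Ls..Max Ls} = set (rev [Min Ls..Max Ls])" by simp
  have "(\<Sum>l\<in>{Min Ls..Max Ls}. wt w (M l)) \<le> (\<Sum>f\<in>?M\<^sub>c. charge_factor eps (?lev f - Min Ls) * w f)"
    unfolding levels combined_matching_def Let_def Ls_def[symmetric]
  proof (rule sum_wt_le_greedy_fold[where lev = ?lev, OF eps match])
    show "finite (M l)" for l using ME \<open>graph E\<close> unfolding graph_def by (meson finite_subset)
    show "card e = 2 \<and> ?lev e = l \<and> 0 \<le> w e" if "e \<in> M l" for e l
    proof -
      have "e \<in> level_edges eps C c w E l" using match[of l] that unfolding matching_def by blast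
      then have "?lev e = l" using \<open>1 \<le> C\<close> by (intro level_of_eq_if_in_level_edges) auto
      moreover have "e \<in> E" using ME that by blast
      ultimately show ?thesis using \<open>graph E\<close> pos[of e] unfolding graph_def by simp
    qed
    show "w g \<le> eps powr real_of_int (l' - l) * w f" if "l < l'" "g \<in> M l" "f \<in> M l'" for l l' g f
    proof -
      have "0 < w g" "0 < w f" using ME pos that(2,3) by blast+
      moreover have "g \<in> level_edges eps C c w E l" "f \<in> level_edges eps C c w E l'"
        using match that(2,3) unfolding matching_def by blast+
      ultimately show ?thesis using level_edges_weight_gap[OF eps \<open>1 \<le> C\<close>] \<open>l < l'\<close> by blast
    qed
    show "sorted_wrt (>) (rev [Min Ls..Max Ls])" by (simp add: sorted_wrt_rev)
    show "\<forall>k\<in>set (rev [Min Ls..Max Ls]). Min Ls \<le> k" by simp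
  qed
  also have "\<dots> \<le> (\<Sum>f\<in>?M\<^sub>c. (1 + 2 * eps / (1 - eps)) * w f)"
  proof (rule sum_mono)
    fix f assume "f \<in> ?M\<^sub>c"
    then have "0 \<le> w f" using \<open>?M\<^sub>c \<subseteq> E\<close> pos by (meson less_imp_le subsetD)
    then show "charge_factor eps (?lev f - Min Ls) * w f \<le> (1 + 2 * eps / (1 - eps)) * w f"
      using charge_factor_le[OF eps] by (rule mult_right_mono[rotated])
  qed
  finally show ?thesis by (simp add: wt_def sum_distrib_left)
qed

lemma approximation_factor_le:
  fixes eps :: real
  assumes "0 < eps" "eps \<le> 1/2"
  shows "(1 + eps) * (1 + 2 * eps / (1 - eps)) \<le> 1 + 7 * eps"
proof -
  have "(1 + eps) * (1 + 2 * eps / (1 - eps)) = (1 + eps)\<^sup>2 / (1 - eps)"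
    using assms by (simp add: field_simps power2_eq_square)
  also have "\<dots> \<le> 1 + 7 * eps"
    using assms by (simp add: field_simps power2_eq_square)
  finally show ?thesis .
qed

theorem lemma10:
  fixes eps :: real and C c :: int and E :: "'v set set" and w :: "'v set \<Rightarrow> real"
    and M :: "int \<Rightarrow> 'v set set" and Mopt :: "'v set set"
  assumes "0 < eps" "eps < 1/2"
    and "C = \<lceil>1 / eps\<rceil>"
    and "0 \<le> c" "c < C"
    and "graph E"
    and "\<forall>e\<in>E. w e \<ge> 1"
    and "\<forall>l. approx_max_weight_matching eps w (level_edges eps C c w E l) (M l)"
    and "max_weight_matching w (copy_edges eps C c w E) Mopt"
  shows "(1 + 7 * eps) * wt w (combined_matching eps C c w E M) \<ge> wt w Mopt"
proof -
  let ?M\<^sub>c = "combined_matching eps C c w E M"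
  define Ls where "Ls = level_of eps C c w ` copy_edges eps C c w E"
  have eps: "0 < eps" "eps < 1" using assms(1,2) by auto
  have "1 \<le> C" using assms(3-5) by linarith
  have "finite E" and pos: "\<And>e. e \<in> E \<Longrightarrow> 0 < w e" using assms(6,7) unfolding graph_def by fastforce+
  have match: "matching (level_edges eps C c w E l) (M l)" for l
    using assms(8) unfolding approx_max_weight_matching_def by blast
  then have "M l \<subseteq> E" for l unfolding matching_def level_edges_def copy_edges_def by blast
  then have "0 \<le> wt w ?M\<^sub>c"
    using combined_matching_subset pos unfolding wt_def by (meson less_imp_le subsetD sum_nonneg)
  have "finite Ls" using \<open>finite E\<close> unfolding Ls_def copy_edges_def by simp
  then have "wt w Mopt \<le> (1 + eps) * (\<Sum>l\<in>{Min Ls..Max Ls}. wt w (M l))"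
    using \<open>finite E\<close> \<open>1 \<le> C\<close> assms(1,8,9) unfolding Ls_def
    by (intro wt_max_weight_matching_le_sum_levels) auto
  also have "\<dots> \<le> (1 + eps) * ((1 + 2 * eps / (1 - eps)) * wt w ?M\<^sub>c)"
    using sum_wt_levels_le_wt_combined_matching[OF eps \<open>1 \<le> C\<close> assms(6) pos match] eps
    unfolding Ls_def by (intro mult_left_mono) auto
  also have "\<dots> \<le> (1 + 7 * eps) * wt w ?M\<^sub>c"
    using approximation_factor_le[of eps] assms(1,2) \<open>0 \<le> wt w ?M\<^sub>c\<close>
    by (simp add: mult.assoc[symmetric] mult_right_mono)
  finally show ?thesis .
qed

end
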